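(* Let $\omega\in L^1[0,1]$ be real-valued with $\omega\ge 0$ a.e. on $[0,1]$ and $\int_0^1\omega(x)\,dx>0$. Fix $c_1\ge 0$ and $c_2\in\mathbb{R}$, not both zero. For each $\lambda\ge 0$ let $\theta(\cdot;\lambda)$ be the absolutely continuous solution on $[0,1]$ of $$\theta'(x;\lambda)=\sqrt{\lambda}\big(\cos^2\theta(x;\lambda)+\omega(x)\sin^2\theta(x;\lambda)\big)\quad\text{a.e. on }[0,1],$$ with initial value $\theta(0;\lambda)=\arctan\frac{\sqrt{\lambda}c_1}{c_2}\in[0,\pi)$. Then $\lim_{\lambda\to+\infty}\theta(1;\lambda)=+\infty$, and for every fixed $\lambda\ge 0$ the function $x\mapsto\theta(x;\lambda)$ is nondecreasing on $[0,1]$.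
   Context: Here $\theta(0;\lambda)$ is the angle in $[0,\pi)$ whose tangent is $\sqrt{\lambda}c_1/c_2$ (equal to $\pi/2$ when $c_2=0$); $\theta$ is the (elliptic) Prüfer angle of the solution of $-y''=\lambda\omega y$, $y(0)=c_1$, $y'(0)=c_2$. *)

theory Defs
  imports "HOL-Analysis.Analysis"
begin

definition abs_continuous_on :: "real \<Rightarrow> real \<Rightarrow> (real \<Rightarrow> real) \<Rightarrow> bool" where
  "abs_continuous_on a b f \<longleftrightarrow>
     (\<forall>\<epsilon>>0. \<exists>\<delta>>0. \<forall>(n::nat) (l::nat \<Rightarrow> real) (r::nat \<Rightarrow> real).
        (\<forall>i<n. a \<le> l i \<and> l i \<le> r i \<and> r i \<le> b) \<and>
        (\<forall>i<n. \<forall>j<n. i \<noteq> j \<longrightarrow> {l i<..<r i} \<inter> {l j<..<r j} = {}) \<and>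
        (\<Sum>i<n. r i - l i) < \<delta>
        \<longrightarrow> (\<Sum>i<n. \<bar>f (r i) - f (l i)\<bar>) < \<epsilon>)"

definition prufer_init :: "real \<Rightarrow> real \<Rightarrow> real \<Rightarrow> real" where
  "prufer_init c1 c2 lam =
     (if c2 = 0 then pi / 2
      else if arctan (sqrt lam * c1 / c2) \<ge> 0 then arctan (sqrt lam * c1 / c2)
      else arctan (sqrt lam * c1 / c2) + pi)"

end

(* Since cos^2 t + w sin^2 t >= min 1 w, the Pruefer equation gives
   theta' >= sqrt lam * min 1 omega >= 0 almost everywhere.  An absolutely continuous
   function maps null sets to null sets (Lusin's property N), so a nonnegative derivative
   almost everywhere makes theta nondecreasing.  On the set S where omega > 0 the derivative
   is positive, so theta is injective there, and the change of variables formula gives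
   sqrt lam * integral of min 1 omega <= integral_S theta' = |theta(S)| <= theta(1) - theta(0).
   As theta(0) >= 0, theta(1; lam) grows at least like sqrt lam. *)

theory Submission
  imports Defs
begin

definition nonoverlapping_subintervals :: "real \<Rightarrow> real \<Rightarrow> 'i set \<Rightarrow> ('i \<Rightarrow> real) \<Rightarrow> ('i \<Rightarrow> real) \<Rightarrow> bool"
  where "nonoverlapping_subintervals a b I l r \<longleftrightarrow>
    (\<forall>i\<in>I. a \<le> l i \<and> l i \<le> r i \<and> r i \<le> b) \<and>
    (\<forall>i\<in>I. \<forall>j\<in>I. i \<noteq> j \<longrightarrow> {l i<..<r i} \<inter> {l j<..<r j} = {})"

lemma abs_continuous_on_iff:
  "abs_continuous_on a b f \<longleftrightarrow>
     (\<forall>e>0. \<exists>d>0. \<forall>(n::nat) l r. nonoverlapping_subintervals a b {..<n} l r \<and> (\<Sum>i<n. r i - l i) < d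
        \<longrightarrow> (\<Sum>i<n. \<bar>f (r i) - f (l i)\<bar>) < e)"
  unfolding abs_continuous_on_def nonoverlapping_subintervals_def by (simp add: Ball_def)

lemma nonoverlapping_subintervals_reindex:
  assumes "bij_betw g J I" "nonoverlapping_subintervals a b I l r"
  shows "nonoverlapping_subintervals a b J (l \<circ> g) (r \<circ> g)"
  using assms unfolding nonoverlapping_subintervals_def bij_betw_def inj_on_def comp_def by blast

lemma abs_continuous_onE:
  assumes "abs_continuous_on a b f" "e > 0"
  obtains d where "d > 0"
    and "\<And>I l r. finite I \<Longrightarrow> nonoverlapping_subintervals a b I l r \<Longrightarrow> (\<Sum>i\<in>I. r i - l i) < d
           \<Longrightarrow> (\<Sum>i\<in>I. \<bar>f (r i) - f (l i)\<bar>) < e"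
proof -
  obtain d where "d > 0" and d: "\<forall>(n::nat) l r. nonoverlapping_subintervals a b {..<n} l r
      \<and> (\<Sum>i<n. r i - l i) < d \<longrightarrow> (\<Sum>i<n. \<bar>f (r i) - f (l i)\<bar>) < e"
    using assms(1)[unfolded abs_continuous_on_iff, rule_format, OF assms(2)] by blast
  have family: "(\<Sum>i\<in>I. \<bar>f (r i) - f (l i)\<bar>) < e"
    if "finite I" "nonoverlapping_subintervals a b I l r" "(\<Sum>i\<in>I. r i - l i) < d" for I l r
  proof -
    obtain g where g: "bij_betw g {..<card I} I"
      using ex_bij_betw_nat_finite[OF \<open>finite I\<close>] atLeast0LessThan by metis
    have "(\<Sum>i\<in>I. \<bar>f (r i) - f (l i)\<bar>) = (\<Sum>k<card I. \<bar>f ((r \<circ> g) k) - f ((l \<circ> g) k)\<bar>)"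
      using sum.reindex_bij_betw[OF g, of "\<lambda>i. \<bar>f (r i) - f (l i)\<bar>"] by simp
    also have "\<dots> < e"
    proof (rule d[rule_format, OF conjI])
      show "nonoverlapping_subintervals a b {..<card I} (l \<circ> g) (r \<circ> g)"
        using g that(2) by (rule nonoverlapping_subintervals_reindex)
      show "(\<Sum>k<card I. (r \<circ> g) k - (l \<circ> g) k) < d"
        using that(3) sum.reindex_bij_betw[OF g, of "\<lambda>i. r i - l i"] by simp
    qed
    finally show ?thesis .
  qed
  show thesis
    by (rule that[OF \<open>d > 0\<close> family])
qed

lemma abs_continuous_on_imp_continuous_on:
  assumes "abs_continuous_on a b f"
  shows "continuous_on {a..b} f"
  unfolding continuous_on_iff
proof (intro ballI allI impI)
  fix x e :: real
  assume x: "x \<in> {a..b}" and "e > 0"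
  obtain d where "d > 0" and d: "\<And>(I::nat set) l r. finite I \<Longrightarrow> nonoverlapping_subintervals a b I l r
      \<Longrightarrow> (\<Sum>i\<in>I. r i - l i) < d \<Longrightarrow> (\<Sum>i\<in>I. \<bar>f (r i) - f (l i)\<bar>) < e"
    using abs_continuous_onE[OF assms \<open>e > 0\<close>] by blast
  have "dist (f y) (f x) < e" if y: "y \<in> {a..b}" "dist y x < d" for y
    using d[of "{0}" "\<lambda>_. min x y" "\<lambda>_. max x y"] x y
    by (cases "x \<le> y") (auto simp: nonoverlapping_subintervals_def dist_real_def abs_minus_commute)
  with \<open>d > 0\<close> show "\<exists>d>0. \<forall>y\<in>{a..b}. dist y x < d \<longrightarrow> dist (f y) (f x) < e"
    by blast
qed

lemma abs_continuous_on_add: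
  assumes f: "abs_continuous_on a b f" and g: "abs_continuous_on a b g"
  shows "abs_continuous_on a b (\<lambda>x. f x + g x)"
  unfolding abs_continuous_on_iff
proof (intro allI impI)
  fix e :: real
  assume "e > 0"
  then have "e / 2 > 0" by simp
  obtain d1 where "d1 > 0" and d1: "\<And>(I::nat set) l r. finite I \<Longrightarrow> nonoverlapping_subintervals a b I l r
      \<Longrightarrow> (\<Sum>i\<in>I. r i - l i) < d1 \<Longrightarrow> (\<Sum>i\<in>I. \<bar>f (r i) - f (l i)\<bar>) < e / 2"
    using abs_continuous_onE[OF f \<open>e / 2 > 0\<close>] by blast
  obtain d2 where "d2 > 0" and d2: "\<And>(I::nat set) l r. finite I \<Longrightarrow> nonoverlapping_subintervals a b I l r
      \<Longrightarrow> (\<Sum>i\<in>I. r i - l i) < d2 \<Longrightarrow> (\<Sum>i\<in>I. \<bar>g (r i) - g (l i)\<bar>) < e / 2"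
    using abs_continuous_onE[OF g \<open>e / 2 > 0\<close>] by blast
  have "(\<Sum>i<n. \<bar>f (r i) + g (r i) - (f (l i) + g (l i))\<bar>) < e"
    if "nonoverlapping_subintervals a b {..<n} l r" "(\<Sum>i<n. r i - l i) < min d1 d2"
    for n :: nat and l r
  proof -
    have "(\<Sum>i<n. \<bar>f (r i) + g (r i) - (f (l i) + g (l i))\<bar>)
          \<le> (\<Sum>i<n. \<bar>f (r i) - f (l i)\<bar> + \<bar>g (r i) - g (l i)\<bar>)"
      by (intro sum_mono) linarith
    also have "\<dots> < e / 2 + e / 2"
      unfolding sum.distrib using d1[of "{..<n}" l r] d2[of "{..<n}" l r] that by simp
    finally show ?thesis by simp
  qed
  moreover have "min d1 d2 > 0"
    using \<open>d1 > 0\<close> \<open>d2 > 0\<close> by simp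
  ultimately show "\<exists>d>0. \<forall>(n::nat) l r. nonoverlapping_subintervals a b {..<n} l r
      \<and> (\<Sum>i<n. r i - l i) < d \<longrightarrow> (\<Sum>i<n. \<bar>f (r i) + g (r i) - (f (l i) + g (l i))\<bar>) < e"
    by blast
qed

lemma abs_continuous_on_cmult_id: "abs_continuous_on a b (\<lambda>x. c * x)"
  unfolding abs_continuous_on_iff
proof (intro allI impI)
  fix e :: real
  assume "e > 0"
  have "(\<Sum>i<n. \<bar>c * r i - c * l i\<bar>) < e"
    if "nonoverlapping_subintervals a b {..<n} l r" "(\<Sum>i<n. r i - l i) < e / (\<bar>c\<bar> + 1)"
    for n :: nat and l r
  proof -
    have lr: "\<forall>i<n. l i \<le> r i"
      using that(1) by (simp add: nonoverlapping_subintervals_def)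
    then have "(\<Sum>i<n. \<bar>c * r i - c * l i\<bar>) = \<bar>c\<bar> * (\<Sum>i<n. r i - l i)"
      by (simp add: sum_distrib_left abs_mult flip: right_diff_distrib)
    also have "\<dots> \<le> (\<bar>c\<bar> + 1) * (\<Sum>i<n. r i - l i)"
      using lr by (intro mult_right_mono sum_nonneg) auto
    also have "\<dots> < e"
      using that(2) by (simp add: field_simps add_pos_nonneg)
    finally show ?thesis .
  qed
  moreover have "e / (\<bar>c\<bar> + 1) > 0"
    using \<open>e > 0\<close> by (simp add: add_pos_nonneg)
  ultimately show "\<exists>d>0. \<forall>(n::nat) l r. nonoverlapping_subintervals a b {..<n} l r
      \<and> (\<Sum>i<n. r i - l i) < d \<longrightarrow> (\<Sum>i<n. \<bar>c * r i - c * l i\<bar>) < e"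
    by blast
qed

lemma measure_continuous_image_interval:
  fixes f :: "real \<Rightarrow> real"
  assumes "continuous_on {c..d} f" "c \<le> d"
  obtains l r where "c \<le> l" "l \<le> r" "r \<le> d" "measure lebesgue (f ` {c..d}) = \<bar>f r - f l\<bar>"
proof -
  obtain m M where mM: "f ` {c..d} = {m..M}" "m \<le> M"
    using continuous_image_closed_interval[OF assms(2,1)] by blast
  then obtain p q where "p \<in> {c..d}" "f p = m" "q \<in> {c..d}" "f q = M"
    by (metis atLeastAtMost_iff imageE order_refl)
  with mM show thesis
    by (intro that[of "min p q" "max p q"]) (auto simp: min_def max_def)
qed

lemma measure_Union_nonoverlapping_cboxes:
  fixes \<F> :: "'a::euclidean_space set set"
  assumes "finite \<F>" "\<And>K. K \<in> \<F> \<Longrightarrow> \<exists>c d. K = cbox c d"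
    and "pairwise (\<lambda>K L. interior K \<inter> interior L = {}) \<F>"
  shows "measure lebesgue (\<Union>\<F>) = (\<Sum>K\<in>\<F>. measure lebesgue K)"
proof (rule measure_negligible_finite_Union[OF assms(1)])
  have frontier: "negligible (K - interior K)" if "K \<in> \<F>" for K
    using assms(2)[OF that] negligible_frontier_interval by auto
  show "pairwise (\<lambda>K L. negligible (K \<inter> L)) \<F>"
    using assms(3) unfolding pairwise_def
    by (blast intro: negligible_subset[OF negligible_Un[OF frontier frontier]])
qed (use assms(2) in blast)

lemma abs_continuous_on_sum_measure_image:
  assumes f: "abs_continuous_on a b f" and "e > 0"
  obtains d where "d > 0"
    and "\<And>\<F>. \<lbrakk>finite \<F>; \<And>K. K \<in> \<F> \<Longrightarrow> \<exists>c d. c \<le> d \<and> K = {c..d} \<and> K \<subseteq> {a..b};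
              pairwise (\<lambda>K L. interior K \<inter> interior L = {}) \<F>; (\<Sum>K\<in>\<F>. measure lebesgue K) < d\<rbrakk>
             \<Longrightarrow> (\<Sum>K\<in>\<F>. measure lebesgue (f ` K)) < e"
proof -
  obtain d where "d > 0" and d: "\<And>(I::real set set) l r. finite I \<Longrightarrow> nonoverlapping_subintervals a b I l r
      \<Longrightarrow> (\<Sum>i\<in>I. r i - l i) < d \<Longrightarrow> (\<Sum>i\<in>I. \<bar>f (r i) - f (l i)\<bar>) < e"
    using abs_continuous_onE[OF f \<open>e > 0\<close>] by blast
  have family: "(\<Sum>K\<in>\<F>. measure lebesgue (f ` K)) < e"
    if \<F>: "finite \<F>" "\<And>K. K \<in> \<F> \<Longrightarrow> \<exists>c d. c \<le> d \<and> K = {c..d} \<and> K \<subseteq> {a..b}"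
      "pairwise (\<lambda>K L. interior K \<inter> interior L = {}) \<F>" "(\<Sum>K\<in>\<F>. measure lebesgue K) < d"
    for \<F>
  proof -
    have "\<exists>l r. a \<le> l \<and> l \<le> r \<and> r \<le> b \<and> {l..r} \<subseteq> K \<and> r - l \<le> measure lebesgue K
        \<and> measure lebesgue (f ` K) = \<bar>f r - f l\<bar>" if "K \<in> \<F>" for K
    proof -
      obtain c d where K: "c \<le> d" "K = {c..d}" "K \<subseteq> {a..b}"
        using \<F>(2)[OF \<open>K \<in> \<F>\<close>] by blast
      moreover have "continuous_on {c..d} f"
        using abs_continuous_on_imp_continuous_on[OF f] K(2,3) continuous_on_subset by blast
      then obtain l r where "c \<le> l" "l \<le> r" "r \<le> d" "measure lebesgue (f ` {c..d}) = \<bar>f r - f l\<bar>"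
        using \<open>c \<le> d\<close> by (rule measure_continuous_image_interval) blast
      ultimately show ?thesis
        by (intro exI[of _ l] exI[of _ r]) auto
    qed
    then obtain l r where lr: "\<And>K. K \<in> \<F> \<Longrightarrow> a \<le> l K \<and> l K \<le> r K \<and> r K \<le> b \<and> {l K..r K} \<subseteq> K
        \<and> r K - l K \<le> measure lebesgue K \<and> measure lebesgue (f ` K) = \<bar>f (r K) - f (l K)\<bar>"
      by metis
    have "{l K<..<r K} \<subseteq> interior K" if "K \<in> \<F>" for K
      using lr[OF that] interior_mono[of "{l K..r K}" K] by auto
    then have "{l K<..<r K} \<inter> {l L<..<r L} = {}" if "K \<in> \<F>" "L \<in> \<F>" "K \<noteq> L" for K L
      using pairwiseD[OF \<F>(3) that] that by blast
    with lr have "nonoverlapping_subintervals a b \<F> l r"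
      unfolding nonoverlapping_subintervals_def by auto
    moreover have "(\<Sum>K\<in>\<F>. r K - l K) \<le> (\<Sum>K\<in>\<F>. measure lebesgue K)"
      using lr by (intro sum_mono) auto
    with \<F>(4) have "(\<Sum>K\<in>\<F>. r K - l K) < d"
      by linarith
    ultimately have "(\<Sum>K\<in>\<F>. \<bar>f (r K) - f (l K)\<bar>) < e"
      by (rule d[OF \<F>(1)])
    then show ?thesis
      using lr by simp
  qed
  show thesis
    by (rule that[OF \<open>d > 0\<close> family])
qed

lemma abs_continuous_on_measure_image_Union:
  assumes f: "abs_continuous_on a b f" and "e > 0"
  obtains d where "d > 0"
    and "\<And>\<D>. \<lbrakk>countable \<D>; \<And>K. K \<in> \<D> \<Longrightarrow> \<exists>c d. c \<le> d \<and> K = {c..d} \<and> K \<subseteq> {a..b};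
              pairwise (\<lambda>K L. interior K \<inter> interior L = {}) \<D>; \<Union>\<D> \<in> lmeasurable;
              measure lebesgue (\<Union>\<D>) < d\<rbrakk>
             \<Longrightarrow> (\<Union>K\<in>\<D>. f ` K) \<in> lmeasurable \<and> measure lebesgue (\<Union>K\<in>\<D>. f ` K) \<le> e"
proof -
  obtain d where "d > 0" and d: "\<And>\<F>. \<lbrakk>finite \<F>; \<And>K. K \<in> \<F> \<Longrightarrow> \<exists>c d. c \<le> d \<and> K = {c..d} \<and> K \<subseteq> {a..b};
      pairwise (\<lambda>K L. interior K \<inter> interior L = {}) \<F>; (\<Sum>K\<in>\<F>. measure lebesgue K) < d\<rbrakk>
      \<Longrightarrow> (\<Sum>K\<in>\<F>. measure lebesgue (f ` K)) < e"
    using abs_continuous_on_sum_measure_image[OF f \<open>e > 0\<close>] by blast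
  have family: "(\<Union>K\<in>\<D>. f ` K) \<in> lmeasurable \<and> measure lebesgue (\<Union>K\<in>\<D>. f ` K) \<le> e"
    if \<D>: "countable \<D>" "\<And>K. K \<in> \<D> \<Longrightarrow> \<exists>c d. c \<le> d \<and> K = {c..d} \<and> K \<subseteq> {a..b}"
      "pairwise (\<lambda>K L. interior K \<inter> interior L = {}) \<D>" "\<Union>\<D> \<in> lmeasurable" "measure lebesgue (\<Union>\<D>) < d"
    for \<D>
  proof -
    have interval_measurable: "K \<in> lmeasurable" if "K \<in> \<D>" for K
      using \<D>(2)[OF that] by auto
    have image_measurable: "f ` K \<in> lmeasurable" if K: "K \<in> \<D>" for K
    proof -
      obtain c d where "K = {c..d}" "K \<subseteq> {a..b}"
        using \<D>(2)[OF K] by blast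
      then have "compact (f ` K)"
        using abs_continuous_on_imp_continuous_on[OF f]
        by (metis compact_Icc compact_continuous_image continuous_on_subset)
      then show ?thesis
        by (rule lmeasurable_compact)
    qed
    have finite_bound: "measure lebesgue (\<Union>K\<in>\<F>. f ` K) \<le> e" if \<F>: "\<F> \<subseteq> \<D>" "finite \<F>" for \<F>
    proof -
      have "\<exists>c d. K = cbox c d" if "K \<in> \<F>" for K
        using \<D>(2) \<F>(1) that by (metis cbox_interval subsetD)
      then have "(\<Sum>K\<in>\<F>. measure lebesgue K) = measure lebesgue (\<Union>\<F>)"
        using \<F>(2) pairwise_subset[OF \<D>(3) \<F>(1)] by (intro measure_Union_nonoverlapping_cboxes[symmetric])
      also have "\<dots> \<le> measure lebesgue (\<Union>\<D>)"
        using \<F> \<D>(4) interval_measurable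
        by (intro measure_mono_fmeasurable sets.finite_Union) (auto intro: fmeasurableD)
      finally have "(\<Sum>K\<in>\<F>. measure lebesgue (f ` K)) < e"
        using \<F> \<D>(2,5) pairwise_subset[OF \<D>(3) \<F>(1)] by (intro d) auto
      moreover have "measure lebesgue (\<Union>K\<in>\<F>. f ` K) \<le> (\<Sum>K\<in>\<F>. measure lebesgue (f ` K))"
        using \<F> image_measurable by (intro measure_UNION_le) auto
      ultimately show ?thesis
        by linarith
    qed
    show ?thesis
      using fmeasurable_UN_bound[OF \<D>(1) image_measurable finite_bound]
        measure_UN_bound[OF \<D>(1) image_measurable finite_bound] by auto
  qed
  show thesis
    by (rule that[OF \<open>d > 0\<close> family])
qed

lemma abs_continuous_on_negligible_image:
  assumes f: "abs_continuous_on a b f" and E: "E \<subseteq> {a..b}" "negligible E"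
  shows "negligible (f ` E)"
  unfolding negligible_outer_le
proof (intro allI impI)
  fix e :: real
  assume "e > 0"
  obtain d where "d > 0" and d: "\<And>\<D>. \<lbrakk>countable \<D>; \<And>K. K \<in> \<D> \<Longrightarrow> \<exists>c d. c \<le> d \<and> K = {c..d} \<and> K \<subseteq> {a..b};
      pairwise (\<lambda>K L. interior K \<inter> interior L = {}) \<D>; \<Union>\<D> \<in> lmeasurable; measure lebesgue (\<Union>\<D>) < d\<rbrakk>
      \<Longrightarrow> (\<Union>K\<in>\<D>. f ` K) \<in> lmeasurable \<and> measure lebesgue (\<Union>K\<in>\<D>. f ` K) \<le> e"
    using abs_continuous_on_measure_image_Union[OF f \<open>e > 0\<close>] by blast
  have "E \<in> lmeasurable" "E \<subseteq> cbox a b" "d / 2 > 0"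
    using E \<open>d > 0\<close> by (simp_all add: negligible_imp_measurable)
  then obtain \<D> where "countable \<D>"
      and \<D>: "\<And>K. K \<in> \<D> \<Longrightarrow> K \<subseteq> cbox a b \<and> K \<noteq> {} \<and> (\<exists>c d. K = cbox c d)"
      and "pairwise (\<lambda>A B. interior A \<inter> interior B = {}) \<D>"
      and "E \<subseteq> \<Union>\<D>" "\<Union>\<D> \<in> lmeasurable"
      and "measure lebesgue (\<Union>\<D>) \<le> measure lebesgue E + d / 2"
    by (rule measurable_outer_intervals_bounded) blast
  moreover have "measure lebesgue E = 0"
    using E(2) by (rule negligible_imp_measure0)
  moreover have "\<exists>c d. c \<le> d \<and> K = {c..d} \<and> K \<subseteq> {a..b}" if K: "K \<in> \<D>" for K
  proof -
    obtain c d where "K = {c..d}"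
      using \<D>[OF K] by (metis cbox_interval)
    with \<D>[OF K] show ?thesis
      by auto
  qed
  ultimately have "(\<Union>K\<in>\<D>. f ` K) \<in> lmeasurable" "measure lebesgue (\<Union>K\<in>\<D>. f ` K) \<le> e"
    using \<open>d > 0\<close> by (auto dest!: d)
  moreover have "f ` E \<subseteq> (\<Union>K\<in>\<D>. f ` K)"
    using \<open>E \<subseteq> \<Union>\<D>\<close> by blast
  ultimately show "\<exists>T. f ` E \<subseteq> T \<and> T \<in> lmeasurable \<and> measure lebesgue T \<le> e"
    by blast
qed

lemma has_real_derivative_pos_exceeds_right:
  fixes g :: "real \<Rightarrow> real"
  assumes "(g has_real_derivative D) (at x within {a..b})" "D > 0" "a \<le> x" "x < y" "y \<le> b"
  obtains t where "x < t" "t \<le> y" "g x < g t"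
proof -
  obtain \<delta> where "\<delta> > 0" and inc: "\<And>h. h > 0 \<Longrightarrow> x + h \<in> {a..b} \<Longrightarrow> h < \<delta> \<Longrightarrow> g x < g (x + h)"
    using has_real_derivative_pos_inc_right[OF assms(1,2)] by blast
  define h where "h = min (\<delta> / 2) (y - x)"
  have "h > 0" "h < \<delta>" "x + h \<in> {a..b}" "x + h \<le> y"
    using \<open>\<delta> > 0\<close> assms(3-5) by (auto simp: h_def)
  with inc show thesis
    by (intro that[of "x + h"]) auto
qed

lemma continuous_on_last_crossing:
  fixes g :: "real \<Rightarrow> real"
  assumes "a \<le> b" and cont: "continuous_on {a..b} g" and "y \<le> g a" "g b < y"
  obtains x where "a \<le> x" "x < b" "g x = y" "\<And>t. x < t \<Longrightarrow> t \<le> b \<Longrightarrow> g t < y"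
proof -
  define T where "T = {a..b} \<inter> g -` {y..}"
  have "closed T"
    unfolding T_def by (rule continuous_closed_preimage[OF cont]) auto
  moreover have "a \<in> T" "bdd_above T"
    using assms by (auto simp: T_def bdd_above_def)
  ultimately have "Sup T \<in> T"
    using closed_contains_Sup by blast
  define x where "x = Sup T"
  have ub: "t \<le> x" if "t \<in> T" for t
    unfolding x_def using that \<open>bdd_above T\<close> by (rule cSup_upper)
  have x: "a \<le> x" "x \<le> b" "y \<le> g x"
    using \<open>Sup T \<in> T\<close> by (auto simp: T_def x_def)
  with \<open>g b < y\<close> have "x < b"
    by (cases "x = b") auto
  have after: "g t < y" if "x < t" "t \<le> b" for t
    using ub[of t] that x by (force simp: T_def)
  have "g x = y"
  proof (rule ccontr)
    assume "g x \<noteq> y"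
    moreover have "continuous_on {x..b} g"
      using cont x by (auto intro: continuous_on_subset)
    ultimately obtain t where "x \<le> t" "t \<le> b" "g t = y"
      using IVT2'[of g b y x] \<open>g b < y\<close> x(3) \<open>x < b\<close> by auto
    with after[of t] \<open>g x \<noteq> y\<close> show False
      by force
  qed
  with x \<open>x < b\<close> after show thesis
    by (intro that) auto
qed

lemma le_if_pos_derivative_off_negligible_image:
  fixes g :: "real \<Rightarrow> real"
  assumes "a \<le> b" and cont: "continuous_on {a..b} g" and N: "negligible (g ` N)"
    and deriv: "\<And>x. x \<in> {a..<b} - N \<Longrightarrow> \<exists>D>0. (g has_real_derivative D) (at x within {a..b})"
  shows "g a \<le> g b"
proof (rule ccontr)
  assume "\<not> g a \<le> g b"
  then have "\<not> negligible {g b<..<g a}"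
    using negligible_interval(2)[of "g b" "g a"] by simp
  then obtain y where y: "g b < y" "y < g a" "y \<notin> g ` N"
    using negligible_subset[OF N] by (metis greaterThanLessThan_iff subsetI)
  then obtain x where x: "a \<le> x" "x < b" "g x = y" and after: "\<And>t. x < t \<Longrightarrow> t \<le> b \<Longrightarrow> g t < y"
    using continuous_on_last_crossing[OF \<open>a \<le> b\<close> cont] by (metis less_imp_le)
  \<comment> \<open>Since y avoids g ` N, the last crossing x lies outside N, where g increases.\<close>
  with y(3) have "x \<notin> N"
    by blast
  with x obtain D where "D > 0" "(g has_real_derivative D) (at x within {a..b})"
    using deriv[of x] by auto
  then obtain t where "x < t" "t \<le> b" "g x < g t"
    using has_real_derivative_pos_exceeds_right x by (metis order_refl)
  with after x(3) show False
    by force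
qed

lemma AE_lborel_negligibleE:
  assumes "AE x in lborel. P x"
  obtains N where "negligible N" "\<And>x. x \<notin> N \<Longrightarrow> P x"
proof -
  have "AE x in lebesgue. P x"
    using assms by (rule AE_completion)
  then show thesis
    using that unfolding eventually_ae_filter_negligible by blast
qed

lemma abs_continuous_on_mono_on_add_linear:
  fixes f :: "real \<Rightarrow> real"
  assumes f: "abs_continuous_on a b f" and "negligible N"
    and deriv: "\<And>x. x \<in> {a..b} - N \<Longrightarrow> (f has_real_derivative f' x) (at x within {a..b})"
    and nonneg: "\<And>x. x \<in> {a..b} - N \<Longrightarrow> f' x \<ge> 0"
    and "\<epsilon> > 0"
  shows "mono_on {a..b} (\<lambda>x. f x + \<epsilon> * x)"
proof (rule mono_onI)
  fix c d
  assume cd: "c \<in> {a..b}" "d \<in> {a..b}" "c \<le> d"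
  define g where "g x = f x + \<epsilon> * x" for x
  have g: "abs_continuous_on a b g"
    unfolding g_def by (intro abs_continuous_on_add abs_continuous_on_cmult_id f)
  then have "negligible (g ` (N \<inter> {a..b}))"
    using \<open>negligible N\<close> by (auto intro: abs_continuous_on_negligible_image negligible_subset[of N])
  moreover have "continuous_on {c..d} g"
    using abs_continuous_on_imp_continuous_on[OF g] by (rule continuous_on_subset) (use cd in auto)
  moreover have "(g has_real_derivative f' x + \<epsilon>) (at x within {c..d})"
    if "x \<in> {c..<d} - N \<inter> {a..b}" for x
  proof -
    have "x \<in> {a..b} - N"
      using that cd by auto
    then have "(g has_real_derivative f' x + \<epsilon>) (at x within {a..b})"
      unfolding g_def by (auto intro!: derivative_eq_intros deriv)
    then show ?thesis
      by (rule has_field_derivative_subset) (use cd in auto)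
  qed
  moreover have "f' x + \<epsilon> > 0" if "x \<in> {c..<d} - N \<inter> {a..b}" for x
    using nonneg[of x] that cd \<open>\<epsilon> > 0\<close> by auto
  ultimately have "g c \<le> g d"
    using \<open>c \<le> d\<close> by (intro le_if_pos_derivative_off_negligible_image[of c d g "N \<inter> {a..b}"]) blast+
  then show "f c + \<epsilon> * c \<le> f d + \<epsilon> * d"
    by (simp add: g_def)
qed

lemma abs_continuous_on_mono_on:
  fixes f f' :: "real \<Rightarrow> real"
  assumes f: "abs_continuous_on a b f"
    and deriv: "AE x in lborel. x \<in> {a..b} \<longrightarrow> (f has_real_derivative f' x) (at x within {a..b})"
    and nonneg: "AE x in lborel. x \<in> {a..b} \<longrightarrow> 0 \<le> f' x"
  shows "mono_on {a..b} f"
proof (rule mono_onI)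
  fix c d
  assume cd: "c \<in> {a..b}" "d \<in> {a..b}" "c \<le> d"
  from deriv nonneg have "AE x in lborel. x \<in> {a..b} \<longrightarrow>
      (f has_real_derivative f' x) (at x within {a..b}) \<and> 0 \<le> f' x"
    by eventually_elim blast
  then obtain N where "negligible N"
    and N: "\<And>x. x \<notin> N \<Longrightarrow> x \<in> {a..b} \<longrightarrow> (f has_real_derivative f' x) (at x within {a..b}) \<and> 0 \<le> f' x"
    by (rule AE_lborel_negligibleE) blast
  have perturbed: "f c + \<epsilon> * c \<le> f d + \<epsilon> * d" if "\<epsilon> > 0" for \<epsilon>
  proof (rule mono_onD[OF _ cd])
    show "mono_on {a..b} (\<lambda>x. f x + \<epsilon> * x)"
      using N by (intro abs_continuous_on_mono_on_add_linear[OF f \<open>negligible N\<close> _ _ that]) auto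
  qed
  have "f c \<le> f d + e" if "e > 0" for e
  proof -
    define \<epsilon> where "\<epsilon> = e / (d - c + 1)"
    have "\<epsilon> > 0" "\<epsilon> * (d - c) \<le> e"
      using that cd by (simp_all add: \<epsilon>_def field_simps)
    with perturbed[of \<epsilon>] show ?thesis
      by (simp add: algebra_simps)
  qed
  then show "f c \<le> f d"
    by (rule field_le_epsilon)
qed

lemma mono_on_less_if_pos_derivative:
  fixes f :: "real \<Rightarrow> real"
  assumes mono: "mono_on {a..b} f" and "x \<in> {a..b}" "y \<in> {a..b}" "x < y"
    and "(f has_real_derivative D) (at x within {a..b})" "D > 0"
  shows "f x < f y"
proof -
  obtain t where "x < t" "t \<le> y" "f x < f t"
    using has_real_derivative_pos_exceeds_right[OF assms(5,6)] assms(2-4) by auto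
  moreover have "f t \<le> f y"
    using mono \<open>x < t\<close> \<open>t \<le> y\<close> assms(2,3) by (auto elim: mono_onD)
  ultimately show ?thesis
    by linarith
qed

lemma mono_on_integral_pos_derivative_le:
  fixes f f' :: "real \<Rightarrow> real"
  assumes mono: "mono_on {a..b} f" and "a \<le> b" and S: "S \<subseteq> {a..b}" "S \<in> sets lebesgue"
    and deriv: "\<And>x. x \<in> S \<Longrightarrow> (f has_real_derivative f' x) (at x within {a..b})"
    and pos: "\<And>x. x \<in> S \<Longrightarrow> f' x > 0"
  shows "f' integrable_on S" "integral S f' \<le> f b - f a"
proof -
  have deriv_S: "(f has_real_derivative f' x) (at x within S)" if "x \<in> S" for x
    using deriv[OF that] S(1) by (rule has_field_derivative_subset)
  have "inj_on f S"
  proof (rule inj_onI)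
    fix x y assume "x \<in> S" "y \<in> S" "f x = f y"
    with S(1) show "x = y"
      using mono_on_less_if_pos_derivative[OF mono _ _ _ deriv pos]
      by (metis linorder_neq_iff order_less_irrefl subsetD)
  qed
  have "f a \<le> f x \<and> f x \<le> f b" if "x \<in> S" for x
    using that S(1) \<open>a \<le> b\<close> by (intro conjI mono_onD[OF mono]) auto
  then have image: "f ` S \<subseteq> {f a..f b}"
    by auto
  have "f differentiable_on S"
    using deriv_S by (auto simp: differentiable_on_def intro: differentiableI has_field_derivative_imp_has_derivative)
  then have "f ` S \<in> lmeasurable"
    using image S(2) differentiable_image_in_sets_lebesgue
    by (intro bounded_set_imp_lmeasurable) (auto intro: bounded_subset[OF bounded_closed_interval])
  then have "(\<lambda>x. \<bar>f' x\<bar> *\<^sub>R (1::real)) absolutely_integrable_on S \<and>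
      integral S (\<lambda>x. \<bar>f' x\<bar> *\<^sub>R (1::real)) = measure lebesgue (f ` S)"
    using has_absolute_integral_change_of_variables_real[OF S(2) deriv_S \<open>inj_on f S\<close>,
        of "\<lambda>_. 1" "measure lebesgue (f ` S)"] lmeasure_integral[OF \<open>f ` S \<in> lmeasurable\<close>]
    by simp
  moreover have "\<bar>f' x\<bar> *\<^sub>R (1::real) = f' x" if "x \<in> S" for x
    using pos[OF that] by simp
  ultimately have "f' integrable_on S" "integral S f' = measure lebesgue (f ` S)"
    by (auto simp: absolutely_integrable_on_def cong: integral_cong integrable_cong)
  moreover have "measure lebesgue (f ` S) \<le> measure lebesgue {f a..f b}"
    using \<open>f ` S \<in> lmeasurable\<close> by (intro measure_mono_fmeasurable[OF image]) auto
  moreover have "f a \<le> f b"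
    using \<open>a \<le> b\<close> by (intro mono_onD[OF mono]) auto
  ultimately show "f' integrable_on S" "integral S f' \<le> f b - f a"
    by auto
qed

lemma set_integrable_min_one:
  fixes \<omega> :: "'a \<Rightarrow> real"
  assumes int: "set_integrable M A \<omega>" and A: "A \<in> sets M" and nonneg: "AE x in M. x \<in> A \<longrightarrow> 0 \<le> \<omega> x"
  shows "set_integrable M A (\<lambda>x. min 1 (\<omega> x))"
proof (rule set_integrable_bound[OF int])
  have "(\<lambda>x. indicator A x *\<^sub>R \<omega> x) \<in> borel_measurable M"
    using int unfolding set_integrable_def by (rule borel_measurable_integrable)
  moreover have "(\<lambda>x. indicator A x *\<^sub>R min 1 (\<omega> x)) = (\<lambda>x. min (indicator A x) (indicator A x *\<^sub>R \<omega> x))"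
    by (auto split: split_indicator)
  ultimately show "set_borel_measurable M A (\<lambda>x. min 1 (\<omega> x))"
    unfolding set_borel_measurable_def using A by simp
  show "AE x in M. x \<in> A \<longrightarrow> norm (min 1 (\<omega> x)) \<le> norm (\<omega> x)"
    using nonneg by eventually_elim auto
qed

lemma set_integrable_Collect_pos_sets:
  fixes \<omega> :: "'a::euclidean_space \<Rightarrow> real"
  assumes "set_integrable lborel A \<omega>"
  shows "{x \<in> A. 0 < \<omega> x} \<in> sets lborel"
proof -
  have "(\<lambda>x. indicator A x *\<^sub>R \<omega> x) \<in> borel_measurable lborel"
    using assms unfolding set_integrable_def by (rule borel_measurable_integrable)
  then have "{x. 0 < indicator A x *\<^sub>R \<omega> x} \<in> sets lborel"
    by measurable
  moreover have "{x. 0 < indicator A x *\<^sub>R \<omega> x} = {x \<in> A. 0 < \<omega> x}"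
    by (auto split: split_indicator)
  ultimately show ?thesis
    by simp
qed

lemma set_integral_min_one_pos:
  fixes \<omega> :: "'a \<Rightarrow> real"
  assumes int: "set_integrable M A \<omega>" and A: "A \<in> sets M" and nonneg: "AE x in M. x \<in> A \<longrightarrow> 0 \<le> \<omega> x"
    and pos: "(LINT x:A|M. \<omega> x) > 0"
  shows "(LINT x:A|M. min 1 (\<omega> x)) > 0"
proof -
  have int_min: "integrable M (\<lambda>x. indicator A x *\<^sub>R min 1 (\<omega> x))"
    using set_integrable_min_one[OF assms(1-3)] unfolding set_integrable_def .
  have nonneg_min: "AE x in M. 0 \<le> indicator A x *\<^sub>R min 1 (\<omega> x)"
    using nonneg by eventually_elim (auto split: split_indicator)
  have "(LINT x:A|M. min 1 (\<omega> x)) \<noteq> 0"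
  proof
    assume "(LINT x:A|M. min 1 (\<omega> x)) = 0"
    then have "AE x in M. indicator A x *\<^sub>R min 1 (\<omega> x) = 0"
      using integral_nonneg_eq_0_iff_AE[OF int_min nonneg_min]
      by (simp add: set_lebesgue_integral_def)
    with nonneg have "AE x in M. indicator A x *\<^sub>R \<omega> x = 0"
      by eventually_elim (auto split: split_indicator if_splits simp: min_def)
    then have "(LINT x:A|M. \<omega> x) = 0"
      unfolding set_lebesgue_integral_def by (rule integral_eq_zero_AE)
    with pos show False
      by simp
  qed
  moreover have "(LINT x:A|M. min 1 (\<omega> x)) \<ge> 0"
    unfolding set_lebesgue_integral_def using nonneg_min by (rule integral_nonneg_AE)
  ultimately show ?thesis
    by linarith
qed

lemma min_one_le_cos_square_add_sin_square:
  fixes w t :: real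
  shows "min 1 w \<le> (cos t)\<^sup>2 + w * (sin t)\<^sup>2"
proof -
  have "min 1 w = min 1 w * (cos t)\<^sup>2 + min 1 w * (sin t)\<^sup>2"
    by (simp flip: distrib_left)
  also have "\<dots> \<le> 1 * (cos t)\<^sup>2 + w * (sin t)\<^sup>2"
    by (intro add_mono mult_right_mono) auto
  finally show ?thesis
    by simp
qed

lemma prufer_init_nonneg: "prufer_init c1 c2 lam \<ge> 0"
  using arctan_bounded[of "sqrt lam * c1 / c2"] by (simp add: prufer_init_def)

lemma integral_spike_subset:
  fixes h :: "'a::euclidean_space \<Rightarrow> 'b::banach"
  assumes h: "h integrable_on A" and "S \<subseteq> A" "negligible N"
    and zero: "\<And>x. x \<in> A - S \<Longrightarrow> x \<notin> N \<Longrightarrow> h x = 0"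
  shows "h integrable_on S" "integral S h = integral A h"
proof -
  have "{x \<in> A - S. h x \<noteq> 0} \<subseteq> N"
    using zero by blast
  then have neg1: "negligible {x \<in> A - S. h x \<noteq> 0}"
    by (rule negligible_subset[OF \<open>negligible N\<close>])
  have "{x \<in> S - A. h x \<noteq> 0} = {}"
    using \<open>S \<subseteq> A\<close> by blast
  then have neg2: "negligible {x \<in> S - A. h x \<noteq> 0}"
    by (metis negligible_empty)
  show "h integrable_on S"
    by (rule integrable_spike_set[OF h neg1 neg2])
  show "integral S h = integral A h"
    by (rule integral_spike_set[OF neg2 neg1])
qed

lemma prufer_angle_increment_ge:
  fixes f \<omega> :: "real \<Rightarrow> real"
  assumes mono: "mono_on {a..b} f" and "a \<le> b" and "k > 0"
    and \<omega>: "set_integrable lborel {a..b} \<omega>" and nonneg: "AE x in lborel. x \<in> {a..b} \<longrightarrow> 0 \<le> \<omega> x"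
    and deriv: "AE x in lborel. x \<in> {a..b} \<longrightarrow>
      (f has_real_derivative k * ((cos (f x))\<^sup>2 + \<omega> x * (sin (f x))\<^sup>2)) (at x within {a..b})"
  shows "k * (LBINT x:{a..b}. min 1 (\<omega> x)) \<le> f b - f a"
proof -
  define f' where "f' x = k * ((cos (f x))\<^sup>2 + \<omega> x * (sin (f x))\<^sup>2)" for x
  from deriv nonneg have "AE x in lborel. x \<in> {a..b} \<longrightarrow>
      (f has_real_derivative f' x) (at x within {a..b}) \<and> 0 \<le> \<omega> x"
    unfolding f'_def by eventually_elim blast
  then obtain N where "negligible N"
    and N: "\<And>x. x \<notin> N \<Longrightarrow> x \<in> {a..b} \<longrightarrow> (f has_real_derivative f' x) (at x within {a..b}) \<and> 0 \<le> \<omega> x"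
    by (rule AE_lborel_negligibleE) blast
  define S where "S = {x \<in> {a..b}. 0 < \<omega> x} - N"
  have S: "S \<subseteq> {a..b}" "S \<in> sets lebesgue"
    using set_integrable_Collect_pos_sets[OF \<omega>] \<open>negligible N\<close>
    by (auto simp: S_def negligible_iff_null_sets)
  have lower: "k * min 1 (\<omega> x) \<le> f' x" for x
    unfolding f'_def using \<open>k > 0\<close> min_one_le_cos_square_add_sin_square by simp
  have deriv_S: "(f has_real_derivative f' x) (at x within {a..b})" if "x \<in> S" for x
    using N[of x] that unfolding S_def by blast
  have pos_S: "f' x > 0" if "x \<in> S" for x
    using lower[of x] that mult_pos_pos[OF \<open>k > 0\<close>, of "min 1 (\<omega> x)"] by (simp add: S_def)
  have min_int: "(\<lambda>x. min 1 (\<omega> x)) integrable_on {a..b}"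
    and min_integral: "(LBINT x:{a..b}. min 1 (\<omega> x)) = integral {a..b} (\<lambda>x. min 1 (\<omega> x))"
    using set_borel_integral_eq_integral[OF set_integrable_min_one[OF \<omega> _ nonneg]] by auto
  have "min 1 (\<omega> x) = 0" if "x \<in> {a..b} - S" "x \<notin> N" for x
    using N[of x] that by (auto simp: S_def)
  note min_S = integral_spike_subset[OF min_int S(1) \<open>negligible N\<close> this]
  have "(LBINT x:{a..b}. min 1 (\<omega> x)) = integral S (\<lambda>x. min 1 (\<omega> x))"
    using min_integral min_S(2) by simp
  then have "k * (LBINT x:{a..b}. min 1 (\<omega> x)) = integral S (\<lambda>x. k * min 1 (\<omega> x))"
    by simp
  also have "\<dots> \<le> integral S f'"
    using min_S(1) mono_on_integral_pos_derivative_le(1)[OF mono \<open>a \<le> b\<close> S deriv_S pos_S] lower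
    by (intro integral_le integrable_on_mult_right)
  also have "\<dots> \<le> f b - f a"
    by (rule mono_on_integral_pos_derivative_le(2)[OF mono \<open>a \<le> b\<close> S deriv_S pos_S])
  finally show ?thesis .
qed

theorem lemma3p1:
  fixes \<omega> :: "real \<Rightarrow> real" and c1 c2 :: real
    and \<theta> :: "real \<Rightarrow> real \<Rightarrow> real"  (* \<theta> lam x = \<theta>(x;lam) *)
  assumes om_int: "set_integrable lborel {0..1} \<omega>"
    and om_nonneg: "AE x in lborel. x \<in> {0..1} \<longrightarrow> \<omega> x \<ge> 0"
    and om_pos: "(LBINT x:{0..1}. \<omega> x) > 0"
    and c1: "c1 \<ge> 0"
    and c12: "c1 \<noteq> 0 \<or> c2 \<noteq> 0"
    and ac: "\<forall>lam\<ge>0. abs_continuous_on 0 1 (\<theta> lam)"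
    and ode: "\<forall>lam\<ge>0. AE x in lborel. x \<in> {0..1} \<longrightarrow>
        (\<theta> lam has_real_derivative
           sqrt lam * ((cos (\<theta> lam x))\<^sup>2 + \<omega> x * (sin (\<theta> lam x))\<^sup>2)) (at x within {0..1})"
    and init: "\<forall>lam\<ge>0. \<theta> lam 0 = prufer_init c1 c2 lam"
  shows "filterlim (\<lambda>lam. \<theta> lam 1) at_top at_top \<and> (\<forall>lam\<ge>0. mono_on {0..1} (\<theta> lam))"
proof -
  define c where "c = (LBINT x:{0..1}. min 1 (\<omega> x))"
  have "c > 0"
    unfolding c_def using om_int om_nonneg om_pos by (intro set_integral_min_one_pos) auto
  have mono: "mono_on {0..1} (\<theta> lam)" if "lam \<ge> 0" for lam
  proof (rule abs_continuous_on_mono_on)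
    show "abs_continuous_on 0 1 (\<theta> lam)" and "AE x in lborel. x \<in> {0..1} \<longrightarrow> (\<theta> lam has_real_derivative
        sqrt lam * ((cos (\<theta> lam x))\<^sup>2 + \<omega> x * (sin (\<theta> lam x))\<^sup>2)) (at x within {0..1})"
      using ac ode that by blast+
    show "AE x in lborel. x \<in> {0..1} \<longrightarrow> 0 \<le> sqrt lam * ((cos (\<theta> lam x))\<^sup>2 + \<omega> x * (sin (\<theta> lam x))\<^sup>2)"
      using om_nonneg by eventually_elim (simp add: that)
  qed
  have growth: "c * sqrt lam \<le> \<theta> lam 1" if "lam > 0" for lam
  proof -
    have "sqrt lam * c \<le> \<theta> lam 1 - \<theta> lam 0"
      unfolding c_def using mono that om_int om_nonneg ode
      by (intro prufer_angle_increment_ge) auto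
    then show ?thesis
      using init prufer_init_nonneg[of c1 c2 lam] that by (simp add: mult.commute)
  qed
  have "eventually (\<lambda>lam. c * sqrt lam \<le> \<theta> lam 1) at_top"
    using eventually_gt_at_top[of 0] by eventually_elim (rule growth)
  moreover have "filterlim (\<lambda>lam. c * sqrt lam) at_top at_top"
    by (rule filterlim_tendsto_pos_mult_at_top[OF tendsto_const \<open>c > 0\<close> sqrt_at_top])
  ultimately have "filterlim (\<lambda>lam. \<theta> lam 1) at_top at_top"
    by (rule filterlim_at_top_mono[rotated])
  with mono show ?thesis
    by blast
qed

end
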